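(* With the notation of the context, let $0\le\lambda_{k-1}<\lambda_k\le1$, and let $x$ solve $\frac{dx}{d\lambda}=A(\lambda)x+b(\lambda)$ on $[\lambda_{k-1},\lambda_k]$. Set $s_{i,k}=\sqrt{1+\lambda_k\alpha_i}$, $s_{i,k-1}=\sqrt{1+\lambda_{k-1}\alpha_i}$. Then $$x(\lambda_k)=\big(I+E\,\Omega_k F^\top\big)x(\lambda_{k-1})+E\,c_k,$$ where $\Omega_k=\mathrm{diag}(\Omega_{ii,k})$ with $\Omega_{ii,k}=\dfrac{s_{i,k-1}/s_{i,k}-1}{\alpha_i}$, and $c_k\in\mathbb{R}^{n_z}$ has entries $$c_{i,k}=\frac{\alpha_i\tilde z_i\,(\lambda_k s_{i,k-1}-\lambda_{k-1}s_{i,k})+\tilde x_i\,(s_{i,k-1}-s_{i,k})}{\alpha_i\,s_{i,k}^2\,s_{i,k-1}}.$$ In particular $I+E\Omega_kF^\top=\exp\!\big(\int_{\lambda_{k-1}}^{\lambda_k}A(\mu)\,d\mu\big)$.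
   Context: $P\in\mathbb{R}^{n_x\times n_x}$, $R\in\mathbb{R}^{n_z\times n_z}$ symmetric positive definite, $H\in\mathbb{R}^{n_z\times n_x}$ of full row rank (held fixed over the interval), $\bar x\in\mathbb{R}^{n_x}$, $z\in\mathbb{R}^{n_z}$. $R^{-1/2}$ is the inverse of the symmetric positive definite square root of $R$. $A(\lambda)=-\tfrac12 PH^\top(\lambda HPH^\top+R)^{-1}H$, $b(\lambda)=(I+2\lambda A(\lambda))\big[(I+\lambda A(\lambda))PH^\top R^{-1}z+A(\lambda)\bar x\big]$. Let $D=R^{-1/2}HPH^\top R^{-1/2}=V\Lambda V^\top$ with $V$ orthogonal, $\Lambda=\mathrm{diag}(\alpha_1,\dots,\alpha_{n_z})$, $\alpha_i>0$; $E=PH^\top R^{-1/2}V$, $F^\top=V^\top R^{-1/2}H$, $\tilde z=V^\top R^{-1/2}z$, $\tilde x=F^\top\bar x$. *)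

theory Defs
  imports "HOL-Analysis.Analysis"
begin

definition sym_mat :: "real^'n^'n \<Rightarrow> bool" where
  "sym_mat M \<longleftrightarrow> transpose M = M"

definition pos_def :: "real^'n^'n \<Rightarrow> bool" where
  "pos_def M \<longleftrightarrow> sym_mat M \<and> (\<forall>v. v \<noteq> 0 \<longrightarrow> v \<bullet> (M *v v) > 0)"

definition mat_sqrt :: "real^'n^'n \<Rightarrow> real^'n^'n" where
  "mat_sqrt R = (THE S. pos_def S \<and> S ** S = R)"

definition mat_inv_sqrt :: "real^'n^'n \<Rightarrow> real^'n^'n" where
  "mat_inv_sqrt R = matrix_inv (mat_sqrt R)"

definition diag_mat :: "('n \<Rightarrow> real) \<Rightarrow> real^'n^'n" where
  "diag_mat d = (\<chi> i j. if i = j then d i else 0)"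

fun mat_pow :: "real^'n^'n \<Rightarrow> nat \<Rightarrow> real^'n^'n" where
  "mat_pow M 0 = mat 1"
| "mat_pow M (Suc k) = M ** mat_pow M k"

definition mat_exp :: "real^'n^'n \<Rightarrow> real^'n^'n" where
  "mat_exp M = (\<Sum>k. (1 / fact k) *\<^sub>R mat_pow M k)"

definition A_mat :: "real^'nx^'nx \<Rightarrow> real^'nx^'nz \<Rightarrow> real^'nz^'nz \<Rightarrow> real \<Rightarrow> real^'nx^'nx" where
  "A_mat P H R l = (- (1/2)) *\<^sub>R
     (P ** transpose H ** matrix_inv (l *\<^sub>R (H ** P ** transpose H) + R) ** H)"

definition b_vec :: "real^'nx^'nx \<Rightarrow> real^'nx^'nz \<Rightarrow> real^'nz^'nz \<Rightarrow> real^'nx \<Rightarrow> real^'nz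
    \<Rightarrow> real \<Rightarrow> real^'nx" where
  "b_vec P H R xbar z l =
     (mat 1 + (2 * l) *\<^sub>R A_mat P H R l) *v
       ((mat 1 + l *\<^sub>R A_mat P H R l) *v (P ** transpose H ** matrix_inv R *v z)
        + A_mat P H R l *v xbar)"

end

(* Everything follows from one factorisation.  With E = P H^T R^(-1/2) V and F = V^T R^(-1/2) H
   the spectral hypothesis says F E = diag alpha, and A(l) = E diag(-1/(2(1 + l alpha_i))) F.
   Products, powers, exponentials and integrals of such sandwiches E diag(d) F are again
   sandwiches, with the diagonals multiplied through diag alpha; this gives
   exp (integral A) = I + E Omega F.  The forcing b(l) also lies in the range of E, so x only
   moves inside that range, where the increment is recovered from y = F x.  Each coordinate y_i
   solves a scalar linear equation whose first integral yields the closed form for c.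
   Since R^(-1/2) is defined through a definite description, the existence and uniqueness of
   positive definite square roots (via the spectral theorem) are needed first. *)

theory Submission
  imports Defs
begin

section \<open>Spectral theorem and positive definite square roots\<close>

lemma sym_mat_inner_commute:
  fixes M :: "real^'n^'n"
  assumes "sym_mat M"
  shows "(M *v u) \<bullet> v = u \<bullet> (M *v v)"
proof -
  have "u \<bullet> (M *v v) = (transpose M *v u) \<bullet> v"
    by (simp add: dot_lmul_matrix[symmetric])
  then show ?thesis
    using assms by (simp add: sym_mat_def del: transpose_matrix_vector)
qed

lemma rayleigh_maximizer_eigenvector:
  fixes M :: "real^'n^'n"
  assumes sym: "sym_mat M" and W: "subspace W" and vW: "v \<in> W" and MvW: "M *v v \<in> W"
    and unit: "v \<bullet> v = 1"
    and max: "\<And>w. w \<in> W \<Longrightarrow> w \<bullet> (M *v w) \<le> (v \<bullet> (M *v v)) * (w \<bullet> w)"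
  shows "M *v v = (v \<bullet> (M *v v)) *\<^sub>R v"
proof -
  define \<mu> where "\<mu> = v \<bullet> (M *v v)"
  define r where "r = M *v v - \<mu> *\<^sub>R v"
  define C where "C = \<mu> * (r \<bullet> r) - r \<bullet> (M *v r)"
  have rv: "r \<bullet> v = 0"
    using unit by (simp add: r_def \<mu>_def inner_diff_left inner_commute[of "M *v v" v])
  have rMv: "r \<bullet> (M *v v) = r \<bullet> r"
    using rv by (simp add: r_def inner_diff_right)
  have vMr: "v \<bullet> (M *v r) = r \<bullet> r"
    using rMv sym_mat_inner_commute[OF sym, of v r] by (simp add: inner_commute)
  \<comment> \<open>maximality of the Rayleigh quotient along the line through v in direction r\<close>
  have quadratic: "2 * t * (r \<bullet> r) \<le> t\<^sup>2 * C" for t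
  proof -
    have "v + t *\<^sub>R r \<in> W"
      using W vW MvW by (simp add: r_def subspace_add subspace_diff subspace_scale)
    from max[OF this] show ?thesis
      using rv rMv vMr unit
      by (simp add: matrix_vector_right_distrib matrix_vector_mult_scaleR inner_add_left
          inner_add_right inner_commute \<mu>_def C_def power2_eq_square algebra_simps)
  qed
  have "r \<bullet> r = 0"
  proof (rule ccontr)
    assume "r \<bullet> r \<noteq> 0"
    then have pos: "r \<bullet> r > 0" by simp
    define t where "t = (r \<bullet> r) / (\<bar>C\<bar> + 1)"
    have "t > 0" using pos by (simp add: t_def)
    with quadratic[of t] have "2 * (r \<bullet> r) \<le> t * \<bar>C\<bar>"
      by (simp add: power2_eq_square) (smt (verit) abs_ge_self mult_le_cancel_left_pos)
    also have "\<dots> < r \<bullet> r" using pos by (simp add: t_def field_simps)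
    finally show False using pos by simp
  qed
  then show ?thesis by (simp add: r_def \<mu>_def)
qed

lemma quadratic_form_max_on_subspace:
  fixes M :: "real^'n^'n"
  assumes W: "subspace W" and "w0 \<in> W" and "w0 \<noteq> 0"
  obtains v where "v \<in> W" "norm v = 1"
    "\<And>w. w \<in> W \<Longrightarrow> w \<bullet> (M *v w) \<le> (v \<bullet> (M *v v)) * (w \<bullet> w)"
proof -
  define K where "K = sphere 0 1 \<inter> W"
  have "compact K"
    unfolding K_def by (intro compact_Int_closed compact_sphere closed_subspace W)
  moreover have "w0 /\<^sub>R norm w0 \<in> K"
    using assms by (simp add: K_def subspace_scale)
  moreover have "continuous_on K (\<lambda>v. v \<bullet> (M *v v))"
    by (intro continuous_intros matrix_vector_mult_linear_continuous_on)
  ultimately obtain v where vK: "v \<in> K" and vmax: "\<And>y. y \<in> K \<Longrightarrow> y \<bullet> (M *v y) \<le> v \<bullet> (M *v v)"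
    using continuous_attains_sup[of K "\<lambda>v. v \<bullet> (M *v v)"] by blast
  have "w \<bullet> (M *v w) \<le> (v \<bullet> (M *v v)) * (w \<bullet> w)" if "w \<in> W" for w
  proof (cases "w = 0")
    case False
    have "(w \<bullet> (M *v w)) / (w \<bullet> w) = (w /\<^sub>R norm w) \<bullet> (M *v (w /\<^sub>R norm w))"
      by (simp add: matrix_vector_mult_scaleR dot_square_norm power2_eq_square divide_inverse mult_ac)
    also have "\<dots> \<le> v \<bullet> (M *v v)"
      using that W False by (intro vmax) (simp add: K_def subspace_scale)
    finally show ?thesis
      using False by (simp add: pos_divide_le_eq)
  qed simp
  with vK show ?thesis
    by (intro that) (auto simp: K_def)
qed

lemma sym_mat_eigenvector_orthogonal:
  fixes M :: "real^'n^'n" and B :: "(real^'n) set"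
  assumes sym: "sym_mat M" and "finite B" and "card B < CARD('n)"
    and eig: "\<And>b. b \<in> B \<Longrightarrow> M *v b = (b \<bullet> (M *v b)) *\<^sub>R b"
  obtains v where "norm v = 1" "M *v v = (v \<bullet> (M *v v)) *\<^sub>R v" "\<And>b. b \<in> B \<Longrightarrow> b \<bullet> v = 0"
proof -
  define W where "W = {v. \<forall>b\<in>B. b \<bullet> v = 0}"
  have W: "subspace W"
    by (auto simp: W_def subspace_def inner_add_right)
  have MW: "M *v w \<in> W" if "w \<in> W" for w
  proof -
    have "b \<bullet> (M *v w) = 0" if "b \<in> B" for b
    proof -
      have "b \<bullet> (M *v w) = (M *v b) \<bullet> w"
        by (simp add: sym_mat_inner_commute[OF sym])
      also have "\<dots> = 0"
        using \<open>w \<in> W\<close> that by (subst eig[OF that]) (simp add: W_def)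
      finally show ?thesis .
    qed
    then show ?thesis by (simp add: W_def)
  qed
  have "dim B < DIM(real^'n)"
    using dim_le_card'[OF \<open>finite B\<close>] \<open>card B < CARD('n)\<close> by simp
  then obtain w0 where "w0 \<noteq> 0" and w0_orth: "\<And>y. y \<in> span B \<Longrightarrow> orthogonal w0 y"
    by (rule orthogonal_to_subspace_exists) blast
  have "b \<bullet> w0 = 0" if "b \<in> B" for b
    using w0_orth[OF span_base[OF that]] by (simp add: orthogonal_def inner_commute)
  then have "w0 \<in> W" by (simp add: W_def)
  then obtain v where v: "v \<in> W" "norm v = 1"
    and max: "\<And>w. w \<in> W \<Longrightarrow> w \<bullet> (M *v w) \<le> (v \<bullet> (M *v v)) * (w \<bullet> w)"
    using quadratic_form_max_on_subspace[OF W _ \<open>w0 \<noteq> 0\<close>] by blast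
  then have "M *v v = (v \<bullet> (M *v v)) *\<^sub>R v"
    using MW by (intro rayleigh_maximizer_eigenvector[OF sym W]) (simp_all add: norm_eq_1)
  with v show ?thesis
    by (intro that) (auto simp: W_def)
qed

lemma sym_mat_orthonormal_eigenvectors:
  fixes M :: "real^'n^'n"
  assumes sym: "sym_mat M" and "k \<le> CARD('n)"
  shows "\<exists>B. finite B \<and> card B = k \<and> pairwise orthogonal B \<and>
    (\<forall>b\<in>B. norm b = 1 \<and> M *v b = (b \<bullet> (M *v b)) *\<^sub>R b)"
  using \<open>k \<le> CARD('n)\<close>
proof (induction k)
  case 0
  show ?case by (intro exI[of _ "{}"]) simp
next
  case (Suc k)
  then obtain B where B: "finite B" "card B = k" "pairwise orthogonal B"
    and eig: "\<forall>b\<in>B. norm b = 1 \<and> M *v b = (b \<bullet> (M *v b)) *\<^sub>R b"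
    by auto
  obtain v where v: "norm v = 1" "M *v v = (v \<bullet> (M *v v)) *\<^sub>R v"
    and orth: "\<And>b. b \<in> B \<Longrightarrow> b \<bullet> v = 0"
    using sym_mat_eigenvector_orthogonal[OF sym] B eig Suc.prems by (metis Suc_le_lessD)
  have "v \<notin> B" using orth v by fastforce
  moreover have "orthogonal v b \<and> orthogonal b v" if "b \<in> B" for b
    using orth[OF that] by (simp add: orthogonal_def inner_commute)
  ultimately show ?case
    using B eig v by (intro exI[of _ "insert v B"]) (auto simp: pairwise_insert)
qed

definition orthonormal_basis :: "(real^'n) set \<Rightarrow> bool" where
  "orthonormal_basis B \<longleftrightarrow>
     finite B \<and> card B = CARD('n) \<and> pairwise orthogonal B \<and> (\<forall>b\<in>B. norm b = 1)"

lemma orthonormal_basis_inner: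
  assumes "orthonormal_basis B" and "b \<in> B" and "c \<in> B"
  shows "b \<bullet> c = (if b = c then 1 else 0)"
  using assms by (auto simp: orthonormal_basis_def norm_eq_1 pairwise_def orthogonal_def)

lemma orthonormal_basis_inner_sum:
  assumes "orthonormal_basis B" and "c \<in> B"
  shows "c \<bullet> (\<Sum>b\<in>B. f b *\<^sub>R b) = f c"
proof -
  have "c \<bullet> (\<Sum>b\<in>B. f b *\<^sub>R b) = (\<Sum>b\<in>B. if b = c then f b else 0)"
    using assms by (auto simp: inner_sum_right orthonormal_basis_inner intro!: sum.cong)
  then show ?thesis
    using assms by (simp add: orthonormal_basis_def)
qed

lemma orthonormal_basis_expansion:
  assumes "orthonormal_basis B"
  shows "(\<Sum>b\<in>B. (x \<bullet> b) *\<^sub>R b) = x"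
proof (rule orthonormal_basis_expand)
  have "independent B"
    using assms by (intro pairwise_orthogonal_independent) (auto simp: orthonormal_basis_def)
  then have "UNIV \<subseteq> span B"
    using assms card_eq_dim[of B UNIV] by (simp add: orthonormal_basis_def)
  then show "x \<in> span B" by blast
qed (use assms in \<open>auto simp: orthonormal_basis_def\<close>)

definition outer_sum :: "(real^'n) set \<Rightarrow> (real^'n \<Rightarrow> real) \<Rightarrow> real^'n^'n" where
  "outer_sum B f = (\<chi> i j. \<Sum>b\<in>B. f b * b$i * b$j)"

lemma outer_sum_mult_vec:
  assumes "finite B"
  shows "outer_sum B f *v x = (\<Sum>b\<in>B. (f b * (b \<bullet> x)) *\<^sub>R b)"
  using assms
  by (simp add: outer_sum_def vec_eq_iff matrix_vector_mult_def inner_vec_def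
      sum_distrib_left sum_distrib_right sum.swap[of _ B] mult_ac)

lemma outer_sum_mult_basis:
  assumes "orthonormal_basis B" and "b \<in> B"
  shows "outer_sum B f *v b = f b *\<^sub>R b"
proof -
  have "outer_sum B f *v b = (\<Sum>c\<in>B. (f c * (c \<bullet> b)) *\<^sub>R c)"
    using assms by (simp add: outer_sum_mult_vec orthonormal_basis_def)
  also have "\<dots> = (\<Sum>c\<in>B. if c = b then f c *\<^sub>R c else 0)"
    using assms by (intro sum.cong) (auto simp: orthonormal_basis_inner)
  finally show ?thesis
    using assms by (simp add: orthonormal_basis_def)
qed

lemma sym_mat_outer_sum: "sym_mat (outer_sum B f)"
  by (simp add: sym_mat_def outer_sum_def transpose_def vec_eq_iff mult_ac)

lemma outer_sum_mult:
  assumes "orthonormal_basis B"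
  shows "outer_sum B f ** outer_sum B g = outer_sum B (\<lambda>b. f b * g b)"
proof -
  have fin: "finite B" using assms by (simp add: orthonormal_basis_def)
  have "outer_sum B f *v (outer_sum B g *v x) = outer_sum B (\<lambda>b. f b * g b) *v x" for x
    using assms fin by (simp add: outer_sum_mult_vec orthonormal_basis_inner_sum mult.assoc)
  then show ?thesis
    by (simp add: matrix_eq matrix_vector_mul_assoc)
qed

lemma outer_sum_pos_def:
  fixes B :: "(real^'n) set"
  assumes B: "orthonormal_basis B" and pos: "\<And>b. b \<in> B \<Longrightarrow> f b > 0"
  shows "pos_def (outer_sum B f)"
  unfolding pos_def_def
proof (intro conjI sym_mat_outer_sum allI impI)
  fix v :: "real^'n"
  assume "v \<noteq> 0"
  have "\<exists>c\<in>B. c \<bullet> v \<noteq> 0"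
  proof (rule ccontr)
    assume "\<not> ?thesis"
    then have "(\<Sum>b\<in>B. (v \<bullet> b) *\<^sub>R b) = 0" by (simp add: inner_commute)
    then show False using orthonormal_basis_expansion[OF B, of v] \<open>v \<noteq> 0\<close> by simp
  qed
  then obtain c where c: "c \<in> B" "c \<bullet> v \<noteq> 0" by blast
  have fin: "finite B" using B by (simp add: orthonormal_basis_def)
  have "v \<bullet> (outer_sum B f *v v) = (\<Sum>b\<in>B. f b * (b \<bullet> v)\<^sup>2)"
    using fin by (simp add: outer_sum_mult_vec inner_sum_right inner_commute power2_eq_square mult_ac)
  also have "\<dots> > 0"
  proof (rule sum_pos2[OF fin c(1)])
    show "0 < f c * (c \<bullet> v)\<^sup>2" using c pos by simp
    show "\<And>b. b \<in> B \<Longrightarrow> 0 \<le> f b * (b \<bullet> v)\<^sup>2" using pos by (simp add: less_imp_le)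
  qed
  finally show "v \<bullet> (outer_sum B f *v v) > 0" .
qed

theorem sym_mat_spectral_decomposition:
  fixes M :: "real^'n^'n"
  assumes "sym_mat M"
  obtains B where "orthonormal_basis B" and "M = outer_sum B (\<lambda>b. b \<bullet> (M *v b))"
proof -
  obtain B where B: "finite B" "card B = CARD('n)" "pairwise orthogonal B"
    and eig: "\<forall>b\<in>B. norm b = 1 \<and> M *v b = (b \<bullet> (M *v b)) *\<^sub>R b"
    using sym_mat_orthonormal_eigenvectors[OF assms order_refl] by blast
  then have onb: "orthonormal_basis B" by (simp add: orthonormal_basis_def)
  define \<mu> where "\<mu> b = b \<bullet> (M *v b)" for b
  have "M *v x = outer_sum B \<mu> *v x" for x
  proof -
    have "M *v x = (\<Sum>b\<in>B. (x \<bullet> b) *\<^sub>R (M *v b))"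
      by (subst orthonormal_basis_expansion[OF onb, of x, symmetric])
        (simp add: vec.sum matrix_vector_mult_scaleR)
    also have "\<dots> = (\<Sum>b\<in>B. (\<mu> b * (b \<bullet> x)) *\<^sub>R b)"
    proof (intro sum.cong refl)
      fix b assume "b \<in> B"
      then have "M *v b = \<mu> b *\<^sub>R b" using eig by (simp add: \<mu>_def)
      then show "(x \<bullet> b) *\<^sub>R (M *v b) = (\<mu> b * (b \<bullet> x)) *\<^sub>R b"
        by (simp add: inner_commute mult.commute)
    qed
    also have "\<dots> = outer_sum B \<mu> *v x"
      using B(1) by (simp add: outer_sum_mult_vec)
    finally show ?thesis .
  qed
  then have "M = outer_sum B \<mu>" by (simp add: matrix_eq)
  then show ?thesis
    using onb that unfolding \<mu>_def by blast
qed

lemma pos_def_sqrt_exists: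
  fixes M :: "real^'n^'n"
  assumes "pos_def M"
  shows "\<exists>S. pos_def S \<and> S ** S = M"
proof -
  define \<mu> where "\<mu> b = b \<bullet> (M *v b)" for b
  obtain B where B: "orthonormal_basis B" and M: "M = outer_sum B \<mu>"
    using sym_mat_spectral_decomposition assms unfolding pos_def_def \<mu>_def by blast
  have pos: "\<mu> b > 0" if "b \<in> B" for b
    using assms that B unfolding \<mu>_def pos_def_def orthonormal_basis_def
    by (metis norm_zero zero_neq_one)
  define S where "S = outer_sum B (\<lambda>b. sqrt (\<mu> b))"
  have "S ** S = outer_sum B (\<lambda>b. sqrt (\<mu> b) * sqrt (\<mu> b))"
    by (simp add: S_def outer_sum_mult[OF B])
  also have "\<dots> = M"
    using pos by (simp add: M outer_sum_def less_imp_le cong: sum.cong)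
  finally have "S ** S = M" .
  moreover have "pos_def S"
    unfolding S_def using pos by (intro outer_sum_pos_def[OF B]) simp
  ultimately show ?thesis by blast
qed

lemma pos_def_sqrt_unique:
  fixes S1 S2 :: "real^'n^'n"
  assumes S1: "pos_def S1" and S2: "pos_def S2" and eq: "S1 ** S1 = S2 ** S2"
  shows "S1 = S2"
proof -
  define D where "D = S1 - S2"
  have "sym_mat D"
    using S1 S2 by (simp add: D_def pos_def_def sym_mat_def transpose_def vec_eq_iff)
  then obtain B where B: "orthonormal_basis B" and D: "D = outer_sum B (\<lambda>b. b \<bullet> (D *v b))"
    by (rule sym_mat_spectral_decomposition)
  have "b \<bullet> (D *v b) = 0" if "b \<in> B" for b
  proof -
    define m where "m = b \<bullet> (D *v b)"
    have Db: "D *v b = m *\<^sub>R b"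
      using outer_sum_mult_basis[OF B that] by (metis D m_def)
    have "b \<noteq> 0" using B that by (auto simp: orthonormal_basis_def)
    then have pos: "b \<bullet> (S1 *v b) + b \<bullet> (S2 *v b) > 0"
      using S1 S2 by (simp add: pos_def_def add_pos_pos)
    have "m * (b \<bullet> (S1 *v b) + b \<bullet> (S2 *v b)) = b \<bullet> (S1 *v (D *v b)) + (D *v b) \<bullet> (S2 *v b)"
      by (simp add: Db matrix_vector_mult_scaleR algebra_simps)
    also have "\<dots> = b \<bullet> (S1 *v (D *v b)) + b \<bullet> (D *v (S2 *v b))"
      using sym_mat_inner_commute[OF \<open>sym_mat D\<close>] by simp
    also have "\<dots> = b \<bullet> ((S1 ** S1) *v b) - b \<bullet> ((S2 ** S2) *v b)"
      by (simp add: D_def matrix_vector_mul_assoc[symmetric] matrix_vector_mult_diff_rdistrib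
          vec.diff inner_diff_right)
    also have "\<dots> = 0" by (simp add: eq)
    finally show ?thesis using pos by (simp add: m_def)
  qed
  then have "D = 0"
    by (subst D) (simp add: outer_sum_def vec_eq_iff)
  then show ?thesis by (simp add: D_def)
qed

lemma pos_def_mat_sqrt:
  fixes R :: "real^'n^'n"
  assumes "pos_def R"
  shows "pos_def (mat_sqrt R)" and "mat_sqrt R ** mat_sqrt R = R"
proof -
  have "\<exists>!S. pos_def S \<and> S ** S = R"
    using pos_def_sqrt_exists[OF assms] pos_def_sqrt_unique by metis
  then have "pos_def (mat_sqrt R) \<and> mat_sqrt R ** mat_sqrt R = R"
    unfolding mat_sqrt_def by (rule theI')
  then show "pos_def (mat_sqrt R)" and "mat_sqrt R ** mat_sqrt R = R" by auto
qed

lemma matrix_inv_unique: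
  fixes A B :: "real^'n^'n"
  assumes "A ** B = mat 1"
  shows "matrix_inv A = B"
proof -
  have "B ** A = mat 1" using assms matrix_left_right_inverse by blast
  then have "\<exists>A'. A ** A' = mat 1 \<and> A' ** A = mat 1" using assms by blast
  then have inv: "A ** matrix_inv A = mat 1 \<and> matrix_inv A ** A = mat 1"
    unfolding matrix_inv_def by (rule someI_ex)
  have "matrix_inv A = matrix_inv A ** (A ** B)" using assms by simp
  also have "\<dots> = B" using inv by (simp add: matrix_mul_assoc)
  finally show ?thesis .
qed

lemma mat_sqrt_mat_inv_sqrt:
  fixes R :: "real^'n^'n"
  assumes "pos_def R"
  shows "mat_sqrt R ** mat_inv_sqrt R = mat 1" and "mat_inv_sqrt R ** mat_sqrt R = mat 1"
proof -
  have "x = 0" if "mat_sqrt R *v x = 0" for x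
  proof (rule ccontr)
    assume "x \<noteq> 0"
    then have "x \<bullet> (mat_sqrt R *v x) > 0" using pos_def_mat_sqrt(1)[OF assms] by (simp add: pos_def_def)
    then show False using that by simp
  qed
  then obtain B where B: "B ** mat_sqrt R = mat 1"
    using matrix_left_invertible_ker by blast
  then have "mat_sqrt R ** B = mat 1" using matrix_left_right_inverse by blast
  moreover from this have "mat_inv_sqrt R = B"
    unfolding mat_inv_sqrt_def by (rule matrix_inv_unique)
  ultimately show "mat_sqrt R ** mat_inv_sqrt R = mat 1" and "mat_inv_sqrt R ** mat_sqrt R = mat 1"
    using B by auto
qed

lemma matrix_inv_pos_def:
  fixes R :: "real^'n^'n"
  assumes "pos_def R"
  shows "matrix_inv R = mat_inv_sqrt R ** mat_inv_sqrt R"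
proof (rule matrix_inv_unique)
  have "R ** (mat_inv_sqrt R ** mat_inv_sqrt R)
      = mat_sqrt R ** (mat_sqrt R ** mat_inv_sqrt R) ** mat_inv_sqrt R"
    by (simp add: pos_def_mat_sqrt(2)[OF assms] matrix_mul_assoc)
  then show "R ** (mat_inv_sqrt R ** mat_inv_sqrt R) = mat 1"
    by (simp add: mat_sqrt_mat_inv_sqrt[OF assms])
qed

section \<open>The scalar modal equation\<close>

text \<open>The conserved quantity is sqrt (1 + t alpha) (y - y_p) for the particular solution
  y_p t = (t alpha zeta + xi) / (1 + t alpha).\<close>

lemma scalar_ode_first_integral:
  fixes \<alpha> \<zeta> \<xi> :: real
  assumes pos: "1 + t * \<alpha> > 0"
    and dy: "(y has_real_derivative
      \<alpha> * ((2 + t * \<alpha>) * \<zeta> - \<xi> - (1 + t * \<alpha>) * y t) / (2 * (1 + t * \<alpha>)\<^sup>2)) (at t within S)"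
  shows "((\<lambda>t. ((1 + t * \<alpha>) * y t - t * \<alpha> * \<zeta> - \<xi>) / sqrt (1 + t * \<alpha>)) has_real_derivative 0)
    (at t within S)"
proof -
  define s where "s = sqrt (1 + t * \<alpha>)"
  define N where "N t = (1 + t * \<alpha>) * y t - t * \<alpha> * \<zeta> - \<xi>" for t
  have s: "s > 0" "s\<^sup>2 = 1 + t * \<alpha>"
    using pos by (simp_all add: s_def)
  have ne: "1 + t * \<alpha> \<noteq> 0" using pos by simp
  have "((\<lambda>t. sqrt (1 + t * \<alpha>)) has_real_derivative inverse s / 2 * (0 + 1 * \<alpha>))
      (at t within S)"
    unfolding s_def
    by (rule DERIV_chain2[where f = sqrt], rule DERIV_real_sqrt[OF pos])
      (auto intro!: derivative_eq_intros)
  then have ds: "((\<lambda>t. sqrt (1 + t * \<alpha>)) has_real_derivative \<alpha> / (2 * s)) (at t within S)"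
    by (simp add: field_simps)
  have dN: "(N has_real_derivative \<alpha> * N t / (2 * s\<^sup>2)) (at t within S)"
  proof -
    have "(N has_real_derivative \<alpha> * y t + (1 + t * \<alpha>) *
        (\<alpha> * ((2 + t * \<alpha>) * \<zeta> - \<xi> - (1 + t * \<alpha>) * y t) / (2 * (1 + t * \<alpha>)\<^sup>2)) - \<alpha> * \<zeta>)
        (at t within S)"
      unfolding N_def by (auto intro!: derivative_eq_intros dy)
    then show ?thesis
      by (rule DERIV_cong) (use ne in \<open>simp add: s(2) N_def field_simps, algebra\<close>)
  qed
  have deriv: "((\<lambda>t. N t / sqrt (1 + t * \<alpha>)) has_real_derivative
      (\<alpha> * N t / (2 * s\<^sup>2) * s - N t * (\<alpha> / (2 * s))) / (s * s)) (at t within S)"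
    using DERIV_divide[OF dN ds] s by (simp add: s_def)
  have "(\<alpha> * N t / (2 * s\<^sup>2) * s - N t * (\<alpha> / (2 * s))) / (s * s) = 0"
    using s(1) by (simp add: field_simps power2_eq_square)
  from DERIV_cong[OF deriv this] show ?thesis by (simp only: N_def)
qed

lemma scalar_ode_endpoint:
  fixes y :: "real \<Rightarrow> real" and \<alpha> \<zeta> \<xi> l0 l1 :: real
  assumes \<alpha>: "\<alpha> > 0" and l0: "0 \<le> l0" and l01: "l0 \<le> l1"
    and ode: "\<And>t. t \<in> {l0..l1} \<Longrightarrow> (y has_real_derivative
      \<alpha> * ((2 + t * \<alpha>) * \<zeta> - \<xi> - (1 + t * \<alpha>) * y t) / (2 * (1 + t * \<alpha>)\<^sup>2)) (at t within {l0..l1})"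
  defines "s0 \<equiv> sqrt (1 + l0 * \<alpha>)" and "s1 \<equiv> sqrt (1 + l1 * \<alpha>)"
  shows "(y l1 - y l0) / \<alpha> = (s0 / s1 - 1) / \<alpha> * y l0
    + (\<alpha> * \<zeta> * (l1 * s0 - l0 * s1) + \<xi> * (s0 - s1)) / (\<alpha> * s1\<^sup>2 * s0)"
proof -
  define u where "u t = ((1 + t * \<alpha>) * y t - t * \<alpha> * \<zeta> - \<xi>) / sqrt (1 + t * \<alpha>)" for t
  have "\<exists>c. \<forall>t\<in>{l0..l1}. u t = c"
  proof (rule has_field_derivative_zero_constant)
    fix t assume t: "t \<in> {l0..l1}"
    then have "1 + t * \<alpha> > 0" using l0 \<alpha> by (simp add: add_pos_nonneg)
    then show "(u has_real_derivative 0) (at t within {l0..l1})"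
      unfolding u_def by (rule scalar_ode_first_integral[OF _ ode[OF t]])
  qed simp
  then have "u l1 = u l0" using l01 by auto
  have s: "s0 > 0" "s1 > 0" and sq: "1 + l0 * \<alpha> = s0\<^sup>2" "1 + l1 * \<alpha> = s1\<^sup>2"
    using \<alpha> l0 l01 by (simp_all add: s0_def s1_def add_pos_nonneg)
  from \<open>u l1 = u l0\<close> have "(s1\<^sup>2 * y l1 - l1 * \<alpha> * \<zeta> - \<xi>) / s1 = (s0\<^sup>2 * y l0 - l0 * \<alpha> * \<zeta> - \<xi>) / s0"
    unfolding u_def sq using s by simp
  then have "s1\<^sup>2 * y l1 = s1 / s0 * (s0\<^sup>2 * y l0 - l0 * \<alpha> * \<zeta> - \<xi>) + l1 * \<alpha> * \<zeta> + \<xi>"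
    using s by (simp add: field_simps)
  then have y1: "y l1 = (s1 / s0 * (s0\<^sup>2 * y l0 - l0 * \<alpha> * \<zeta> - \<xi>) + l1 * \<alpha> * \<zeta> + \<xi>) / s1\<^sup>2"
    using s by (simp add: field_simps)
  have l: "l0 = (s0\<^sup>2 - 1) / \<alpha>" "l1 = (s1\<^sup>2 - 1) / \<alpha>"
    using sq \<alpha> by (simp_all add: field_simps)
  have "((s1 / s0 * (s0\<^sup>2 * Y - l0 * \<alpha> * \<zeta> - \<xi>) + l1 * \<alpha> * \<zeta> + \<xi>) / s1\<^sup>2 - Y) / \<alpha>
      = (s0 / s1 - 1) / \<alpha> * Y + (\<alpha> * \<zeta> * (l1 * s0 - l0 * s1) + \<xi> * (s0 - s1)) / (\<alpha> * s1\<^sup>2 * s0)"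
    for Y
    using s \<alpha> unfolding l by (simp add: field_simps power2_eq_square)
  then show ?thesis
    unfolding y1 .
qed

lemma has_integral_neg_half_reciprocal:
  fixes \<alpha> l0 l1 :: real
  assumes \<alpha>: "\<alpha> > 0" and l0: "0 \<le> l0" and l01: "l0 \<le> l1"
  shows "((\<lambda>t. - 1 / (2 * (1 + t * \<alpha>))) has_integral
    ln (sqrt (1 + l0 * \<alpha>) / sqrt (1 + l1 * \<alpha>)) / \<alpha>) {l0..l1}"
proof -
  have pos: "1 + t * \<alpha> > 0" if "t \<in> {l0..l1}" for t
    using that l0 \<alpha> by (simp add: add_pos_nonneg)
  have "((\<lambda>t. - 1 / (2 * (1 + t * \<alpha>))) has_integral
      (- ln (1 + l1 * \<alpha>) / (2 * \<alpha>)) - (- ln (1 + l0 * \<alpha>) / (2 * \<alpha>))) {l0..l1}"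
  proof (rule fundamental_theorem_of_calculus[OF l01])
    fix t assume "t \<in> {l0..l1}"
    then have "1 + t * \<alpha> > 0" by (rule pos)
    then have "((\<lambda>t. - ln (1 + t * \<alpha>) / (2 * \<alpha>)) has_real_derivative - 1 / (2 * (1 + t * \<alpha>)))
        (at t within {l0..l1})"
      using \<alpha> by (auto intro!: derivative_eq_intros simp: divide_simps)
    then show "((\<lambda>t. - ln (1 + t * \<alpha>) / (2 * \<alpha>)) has_vector_derivative - 1 / (2 * (1 + t * \<alpha>)))
        (at t within {l0..l1})"
      by (simp add: has_real_derivative_iff_has_vector_derivative)
  qed
  moreover have "ln (sqrt (1 + l0 * \<alpha>) / sqrt (1 + l1 * \<alpha>)) / \<alpha>
      = (- ln (1 + l1 * \<alpha>) / (2 * \<alpha>)) - (- ln (1 + l0 * \<alpha>) / (2 * \<alpha>))"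
    using pos[of l0] pos[of l1] l01 by (simp add: ln_div ln_sqrt diff_divide_distrib)
  ultimately show ?thesis by simp
qed

section \<open>Diagonal sandwiches\<close>

lemma matrix_add_rdistrib: "(A + B) ** C = A ** C + B ** C"
  by (vector matrix_matrix_mult_def sum.distrib distrib_right)

lemma diag_mat_mult_vec: "diag_mat d *v v = (\<chi> i. d i * v$i)"
proof -
  have "(\<Sum>j\<in>UNIV. (if i = j then d i else 0) * v$j) = (\<Sum>j\<in>UNIV. if j = i then d i * v$i else 0)"
    for i by (intro sum.cong) auto
  then show ?thesis by (simp add: diag_mat_def matrix_vector_mult_def vec_eq_iff)
qed

lemma matrix_mult_diag_mat: "A ** diag_mat d = (\<chi> p k. A$p$k * d k)"
proof -
  have "(\<Sum>j\<in>UNIV. A$p$j * (if j = k then d j else 0)) = (\<Sum>j\<in>UNIV. if j = k then A$p$k * d k else 0)"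
    for p k by (intro sum.cong) auto
  then show ?thesis by (simp add: diag_mat_def matrix_matrix_mult_def vec_eq_iff)
qed

lemma diag_mat_mult: "diag_mat a ** diag_mat b = diag_mat (\<lambda>i. a i * b i)"
  by (simp add: matrix_mult_diag_mat) (simp add: diag_mat_def vec_eq_iff)

lemma sandwich_eq_sum:
  fixes E :: "real^'m^'n" and F :: "real^'n^'m"
  shows "E ** diag_mat d ** F = (\<Sum>i\<in>UNIV. d i *\<^sub>R (\<chi> p q. E$p$i * F$i$q))"
  by (simp add: matrix_mult_diag_mat)
    (simp add: matrix_matrix_mult_def vec_eq_iff sum_distrib_left mult_ac)

lemma diag_mat_one: "diag_mat (\<lambda>i. 1) = mat 1"
  by (simp add: diag_mat_def mat_def)

lemma mat_one_add_diag_mat: "mat 1 + c *\<^sub>R diag_mat d = diag_mat (\<lambda>i. 1 + c * d i)"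
  by (simp add: diag_mat_def mat_def vec_eq_iff)

lemma scaleR_diag_mat: "c *\<^sub>R diag_mat d = diag_mat (\<lambda>i. c * d i)"
  by (simp add: diag_mat_def vec_eq_iff)

lemma sandwich_mult_vec: "(E ** diag_mat d ** F) *v v = E *v (\<chi> i. d i * (F *v v)$i)"
  by (simp add: matrix_vector_mul_assoc[symmetric] diag_mat_mult_vec)

lemma scaleR_sandwich: "c *\<^sub>R (E ** diag_mat d ** F) = E ** diag_mat (\<lambda>i. c * d i) ** F"
  by (simp add: scalar_matrix_assoc matrix_scalar_ac scaleR_diag_mat[symmetric])

lemma sums_sandwich:
  fixes E :: "real^'m^'n" and F :: "real^'n^'m"
  assumes "\<And>i. (\<lambda>k. f k i) sums g i"
  shows "(\<lambda>k. E ** diag_mat (f k) ** F) sums (E ** diag_mat g ** F)"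
  unfolding sandwich_eq_sum using assms by (intro sums_sum sums_scaleR_left)

lemma has_integral_sandwich:
  fixes E :: "real^'m^'n" and F :: "real^'n^'m"
  assumes "\<And>i. ((\<lambda>t. f t i) has_integral g i) S"
  shows "((\<lambda>t. E ** diag_mat (f t) ** F) has_integral (E ** diag_mat g ** F)) S"
  unfolding sandwich_eq_sum using assms by (intro has_integral_sum finite has_integral_scaleR_left)

locale diagonal_pair =
  fixes E :: "real^'m^'n" and F :: "real^'n^'m" and \<alpha> :: "'m \<Rightarrow> real"
  assumes F_E: "F ** E = diag_mat \<alpha>" and \<alpha>_pos: "\<And>i. \<alpha> i > 0"
begin

lemma sandwich_mult:
  "(E ** diag_mat g ** F) ** (E ** diag_mat h ** F) = E ** diag_mat (\<lambda>i. g i * \<alpha> i * h i) ** F"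
proof -
  have "(E ** diag_mat g ** F) ** (E ** diag_mat h ** F) = E ** (diag_mat g ** (F ** E) ** diag_mat h) ** F"
    by (simp only: matrix_mul_assoc)
  then show ?thesis by (simp add: F_E diag_mat_mult)
qed

lemma mat_pow_Suc_sandwich:
  "mat_pow (E ** diag_mat g ** F) (Suc k) = E ** diag_mat (\<lambda>i. g i * (g i * \<alpha> i) ^ k) ** F"
proof (induction k)
  case 0
  show ?case by simp
next
  case (Suc k)
  have "mat_pow (E ** diag_mat g ** F) (Suc (Suc k))
      = (E ** diag_mat g ** F) ** mat_pow (E ** diag_mat g ** F) (Suc k)"
    by (simp only: mat_pow.simps)
  also have "\<dots> = E ** diag_mat (\<lambda>i. g i * (g i * \<alpha> i) ^ Suc k) ** F"
    unfolding Suc.IH sandwich_mult by (simp add: mult_ac)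
  finally show ?case .
qed

lemma mat_exp_sandwich:
  "mat_exp (E ** diag_mat g ** F) = mat 1 + E ** diag_mat (\<lambda>i. (exp (g i * \<alpha> i) - 1) / \<alpha> i) ** F"
proof -
  define T where "T k = (1 / fact k) *\<^sub>R mat_pow (E ** diag_mat g ** F) k" for k
  have "(\<lambda>k. g i * (g i * \<alpha> i) ^ k / fact (Suc k)) sums ((exp (g i * \<alpha> i) - 1) / \<alpha> i)" for i
  proof -
    define f where "f = (\<lambda>n. (g i * \<alpha> i) ^ n /\<^sub>R fact n)"
    have "f sums (exp (g i * \<alpha> i) - 1 + f 0)"
      using exp_converges[of "g i * \<alpha> i"] by (simp add: f_def)
    then have "(\<lambda>k. f (Suc k)) sums (exp (g i * \<alpha> i) - 1)"
      by (simp only: sums_Suc_iff)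
    then have "(\<lambda>k. f (Suc k) / \<alpha> i) sums ((exp (g i * \<alpha> i) - 1) / \<alpha> i)"
      by (rule sums_divide)
    moreover have "f (Suc k) / \<alpha> i = g i * (g i * \<alpha> i) ^ k / fact (Suc k)" for k
      using \<alpha>_pos[of i] by (simp add: f_def field_simps del: fact_Suc)
    ultimately show ?thesis by simp
  qed
  then have "(\<lambda>k. T (Suc k)) sums (E ** diag_mat (\<lambda>i. (exp (g i * \<alpha> i) - 1) / \<alpha> i) ** F)"
    unfolding T_def mat_pow_Suc_sandwich scaleR_sandwich
    by (simp add: sums_sandwich divide_inverse mult_ac)
  then have "T sums (E ** diag_mat (\<lambda>i. (exp (g i * \<alpha> i) - 1) / \<alpha> i) ** F + T 0)"
    by (simp only: sums_Suc_iff)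
  moreover have "mat_exp (E ** diag_mat g ** F) = (\<Sum>k. T k)" and "T 0 = mat 1"
    by (simp_all add: mat_exp_def T_def)
  ultimately show ?thesis
    by (simp add: sums_iff add.commute)
qed

lemma F_mult_vec_E: "F *v (E *v w) = (\<chi> i. \<alpha> i * w$i)"
  by (simp add: matrix_vector_mul_assoc F_E diag_mat_mult_vec)

lemma sandwich_mult_vec_range: "(E ** diag_mat d ** F) *v (E *v w) = E *v (\<chi> i. d i * \<alpha> i * w$i)"
  by (simp add: sandwich_mult_vec F_mult_vec_E mult.assoc)

lemma mat_one_add_sandwich_mult_vec_range:
  "(mat 1 + c *\<^sub>R (E ** diag_mat d ** F)) *v (E *v w) = E *v (\<chi> i. (1 + c * d i * \<alpha> i) * w$i)"
proof -
  have "(mat 1 + c *\<^sub>R (E ** diag_mat d ** F)) *v (E *v w) = E *v w + c *\<^sub>R (E *v (\<chi> i. d i * \<alpha> i * w$i))"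
    by (simp add: matrix_vector_mult_add_rdistrib scaleR_matrix_vector_assoc[symmetric]
        sandwich_mult_vec_range)
  also have "\<dots> = E *v (w + c *\<^sub>R (\<chi> i. d i * \<alpha> i * w$i))"
    by (simp add: matrix_vector_right_distrib matrix_vector_mult_scaleR)
  also have "w + c *\<^sub>R (\<chi> i. d i * \<alpha> i * w$i) = (\<chi> i. (1 + c * d i * \<alpha> i) * w$i)"
    by (simp add: vec_eq_iff algebra_simps)
  finally show ?thesis .
qed

lemma increment_in_range:
  fixes x :: "real \<Rightarrow> real^'n"
  assumes "a \<le> b" and "\<And>t. t \<in> {a..b} \<Longrightarrow> (x has_vector_derivative E *v w t) (at t within {a..b})"
  shows "x b - x a = E *v (\<chi> i. (F *v (x b - x a))$i / \<alpha> i)"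
proof -
  \<comment> \<open>L fixes the range of E, so x - L x has derivative zero\<close>
  define L where "L = E ** diag_mat (\<lambda>i. 1 / \<alpha> i) ** F"
  have L_E: "L *v (E *v v) = E *v v" for v
    using \<alpha>_pos by (simp add: L_def sandwich_mult_vec_range less_imp_neq[symmetric])
  have dconst: "((\<lambda>t. x t - L *v x t) has_vector_derivative 0) (at t within {a..b})"
    if "t \<in> {a..b}" for t
  proof -
    note dx = assms(2)[OF that]
    have "((\<lambda>t. x t - L *v x t) has_vector_derivative E *v w t - L *v (E *v w t)) (at t within {a..b})"
      by (intro has_vector_derivative_diff dx
          bounded_linear.has_vector_derivative[OF matrix_vector_mul_bounded_linear])
    then show ?thesis by (simp add: L_E)
  qed
  obtain c where c: "\<And>t. t \<in> {a..b} \<Longrightarrow> x t - L *v x t = c"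
    using has_vector_derivative_zero_constant[OF convex_real_interval(5) dconst] by blast
  have "x b - L *v x b = x a - L *v x a"
    using c[of a] c[of b] \<open>a \<le> b\<close> by simp
  then have "x b - x a = L *v (x b - x a)"
    by (simp add: matrix_vector_mult_diff_distrib algebra_simps)
  then show ?thesis
    by (simp add: L_def sandwich_mult_vec)
qed

lemma ode_endpoint:
  fixes x :: "real \<Rightarrow> real^'n" and \<zeta> \<xi> :: "real^'m"
  assumes l0: "0 \<le> l0" and l01: "l0 \<le> l1"
    and ode: "\<And>t. t \<in> {l0..l1} \<Longrightarrow> (x has_vector_derivative E *v (\<chi> i.
      ((2 + t * \<alpha> i) * \<zeta>$i - \<xi>$i - (1 + t * \<alpha> i) * (F *v x t)$i) / (2 * (1 + t * \<alpha> i)\<^sup>2)))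
      (at t within {l0..l1})"
  defines "s0 \<equiv> \<lambda>i. sqrt (1 + l0 * \<alpha> i)" and "s1 \<equiv> \<lambda>i. sqrt (1 + l1 * \<alpha> i)"
  shows "x l1 = (mat 1 + E ** diag_mat (\<lambda>i. (s0 i / s1 i - 1) / \<alpha> i) ** F) *v x l0
    + E *v (\<chi> i. (\<alpha> i * \<zeta>$i * (l1 * s0 i - l0 * s1 i) + \<xi>$i * (s0 i - s1 i))
                   / (\<alpha> i * (s1 i)\<^sup>2 * s0 i))"
proof -
  define y where "y t = F *v x t" for t
  define \<Omega> where "\<Omega> i = (s0 i / s1 i - 1) / \<alpha> i" for i
  define c where "c = (\<chi> i. (\<alpha> i * \<zeta>$i * (l1 * s0 i - l0 * s1 i) + \<xi>$i * (s0 i - s1 i))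
                   / (\<alpha> i * (s1 i)\<^sup>2 * s0 i))"
  have "(y l1 $ i - y l0 $ i) / \<alpha> i = \<Omega> i * y l0 $ i + c $ i" for i
  proof -
    have lin: "bounded_linear (\<lambda>v. (F *v v) $ i)"
      by (rule bounded_linear_compose[OF bounded_linear_vec_nth matrix_vector_mul_bounded_linear])
    have "((\<lambda>t. y t $ i) has_real_derivative \<alpha> i * ((2 + t * \<alpha> i) * \<zeta>$i - \<xi>$i - (1 + t * \<alpha> i) * y t $ i)
        / (2 * (1 + t * \<alpha> i)\<^sup>2)) (at t within {l0..l1})" if "t \<in> {l0..l1}" for t
      using bounded_linear.has_vector_derivative[OF lin ode[OF that]]
      by (simp add: has_real_derivative_iff_has_vector_derivative y_def F_mult_vec_E)
    from scalar_ode_endpoint[OF \<alpha>_pos l0 l01 this] show ?thesis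
      by (simp add: \<Omega>_def c_def s0_def s1_def)
  qed
  then have coords: "(\<chi> i. \<Omega> i * y l0 $ i) + c = (\<chi> i. (F *v (x l1 - x l0)) $ i / \<alpha> i)"
    by (simp add: vec_eq_iff y_def matrix_vector_mult_diff_distrib)
  have "(mat 1 + E ** diag_mat \<Omega> ** F) *v x l0 + E *v c = x l0 + (E *v (\<chi> i. \<Omega> i * y l0 $ i) + E *v c)"
    by (simp add: matrix_vector_mult_add_rdistrib sandwich_mult_vec y_def)
  also have "\<dots> = x l0 + E *v (\<chi> i. (F *v (x l1 - x l0)) $ i / \<alpha> i)"
    by (simp only: matrix_vector_right_distrib[symmetric] coords)
  also have "\<dots> = x l1"
    using increment_in_range[OF l01 ode] by simp
  finally show ?thesis
    unfolding \<Omega>_def[abs_def] c_def by (rule sym)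
qed

end

section \<open>The Kalman setting\<close>

locale kalman_setting =
  fixes P :: "real^'nx^'nx" and R :: "real^'nz^'nz" and H :: "real^'nx^'nz"
    and V :: "real^'nz^'nz" and \<alpha> :: "'nz \<Rightarrow> real"
  assumes R_pd: "pos_def R" and V_orth: "orthogonal_matrix V"
    and D_eig: "mat_inv_sqrt R ** H ** P ** transpose H ** mat_inv_sqrt R
                  = V ** diag_mat \<alpha> ** transpose V"
    and \<alpha>_pos: "\<And>i. \<alpha> i > 0"
begin

abbreviation "S \<equiv> mat_sqrt R"
abbreviation "T \<equiv> mat_inv_sqrt R"
abbreviation "E \<equiv> P ** transpose H ** T ** V"
abbreviation "Ft \<equiv> transpose V ** T ** H"

lemma V_transpose: "transpose V ** V = mat 1" "V ** transpose V = mat 1"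
  using V_orth by (auto simp: orthogonal_matrix_def)

lemma Ft_E: "Ft ** E = diag_mat \<alpha>"
proof -
  have "Ft ** E = transpose V ** (T ** H ** P ** transpose H ** T) ** V"
    by (simp add: matrix_mul_assoc)
  also have "\<dots> = (transpose V ** V) ** diag_mat \<alpha> ** (transpose V ** V)"
    by (simp add: D_eig matrix_mul_assoc)
  finally show ?thesis by (simp add: V_transpose)
qed

sublocale diagonal_pair E Ft \<alpha>
  by unfold_locales (rule Ft_E, rule \<alpha>_pos)

lemma A_mat_eq:
  assumes "0 \<le> t"
  shows "A_mat P H R t = E ** diag_mat (\<lambda>i. - 1 / (2 * (1 + t * \<alpha> i))) ** Ft"
proof -
  have pos: "1 + t * \<alpha> i > 0" for i
    using assms \<alpha>_pos[of i] by (simp add: add_pos_nonneg)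
  note ST = mat_sqrt_mat_inv_sqrt[OF R_pd]
  define M where "M = t *\<^sub>R (H ** P ** transpose H) + R"
  define D where "D = diag_mat (\<lambda>i. 1 / (1 + t * \<alpha> i))"
  have "T ** M ** T = t *\<^sub>R (T ** H ** P ** transpose H ** T) + T ** (S ** S) ** T"
    by (simp add: M_def pos_def_mat_sqrt(2)[OF R_pd] matrix_add_ldistrib matrix_add_rdistrib
        matrix_scalar_ac scalar_matrix_assoc matrix_mul_assoc)
  also have "\<dots> = t *\<^sub>R (V ** diag_mat \<alpha> ** transpose V) + mat 1"
    by (simp only: D_eig) (simp add: matrix_mul_assoc ST)
  also have "\<dots> = V ** diag_mat (\<lambda>i. 1 + t * \<alpha> i) ** transpose V"
    by (simp add: mat_one_add_diag_mat[symmetric] matrix_add_ldistrib matrix_add_rdistrib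
        V_transpose matrix_scalar_ac scalar_matrix_assoc add.commute)
  finally have TMT: "T ** M ** T = V ** diag_mat (\<lambda>i. 1 + t * \<alpha> i) ** transpose V" .
  have "M ** (T ** V ** D ** transpose V ** T) = S ** (T ** M ** T) ** V ** D ** transpose V ** T"
    by (simp add: matrix_mul_assoc ST)
  also have "\<dots> = S ** V ** (diag_mat (\<lambda>i. 1 + t * \<alpha> i) ** (transpose V ** V) ** D) ** transpose V ** T"
    by (simp only: TMT matrix_mul_assoc)
  also have "\<dots> = S ** V ** transpose V ** T"
    using pos by (simp add: D_def V_transpose diag_mat_mult diag_mat_one less_imp_neq[symmetric]
        matrix_mul_assoc)
  also have "\<dots> = S ** (V ** transpose V) ** T"
    by (simp only: matrix_mul_assoc)
  also have "\<dots> = mat 1"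
    by (simp add: V_transpose ST)
  finally have "matrix_inv M = T ** V ** D ** transpose V ** T"
    by (rule matrix_inv_unique)
  then have "A_mat P H R t = (- (1/2)) *\<^sub>R (E ** D ** Ft)"
    by (simp add: A_mat_def M_def matrix_mul_assoc)
  then show ?thesis
    by (simp add: D_def scaleR_sandwich)
qed

lemma P_Ht_inv_R_mult_vec: "P ** transpose H ** matrix_inv R *v z = E *v (transpose V ** T *v z)"
proof -
  have "E *v (transpose V ** T *v z) = P ** transpose H ** T ** (V ** transpose V) ** T *v z"
    by (simp add: matrix_vector_mul_assoc matrix_mul_assoc)
  then show ?thesis
    by (simp add: V_transpose matrix_inv_pos_def[OF R_pd] matrix_mul_assoc)
qed

lemma b_vec_eq:
  assumes "0 \<le> t"
  shows "b_vec P H R xbar z t = E *v (\<chi> i.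
    ((2 + t * \<alpha> i) * (transpose V ** T *v z)$i - (Ft *v xbar)$i) / (2 * (1 + t * \<alpha> i)\<^sup>2))"
proof -
  define a where "a i = - 1 / (2 * (1 + t * \<alpha> i))" for i
  define \<zeta> where "\<zeta> = transpose V ** T *v z"
  define \<xi> where "\<xi> = Ft *v xbar"
  have A: "A_mat P H R t = E ** diag_mat a ** Ft"
    using A_mat_eq[OF assms] by (simp add: a_def[abs_def])
  have vec_add: "(\<chi> i. f i) + (\<chi> i. g i) = (\<chi> i. f i + g i)" for f g :: "'nz \<Rightarrow> real"
    by (simp add: vec_eq_iff)
  have "b_vec P H R xbar z t = (mat 1 + (2 * t) *\<^sub>R (E ** diag_mat a ** Ft)) *v
      (E *v (\<chi> i. (1 + t * a i * \<alpha> i) * \<zeta>$i + a i * \<xi>$i))"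
    unfolding b_vec_def A P_Ht_inv_R_mult_vec mat_one_add_sandwich_mult_vec_range sandwich_mult_vec
      \<zeta>_def \<xi>_def matrix_vector_right_distrib[symmetric] vec_add ..
  also have "\<dots> = E *v (\<chi> i. (1 + 2 * t * a i * \<alpha> i) * ((1 + t * a i * \<alpha> i) * \<zeta>$i + a i * \<xi>$i))"
    by (simp add: mat_one_add_sandwich_mult_vec_range mult.assoc)
  also have "(\<lambda>i. (1 + 2 * t * a i * \<alpha> i) * ((1 + t * a i * \<alpha> i) * \<zeta>$i + a i * \<xi>$i))
      = (\<lambda>i. ((2 + t * \<alpha> i) * \<zeta>$i - \<xi>$i) / (2 * (1 + t * \<alpha> i)\<^sup>2))" (is "?f = ?g")
  proof
    fix i
    define q where "q = 1 + t * \<alpha> i"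
    have "q \<noteq> 0"
      using assms \<alpha>_pos[of i] by (simp add: q_def add_pos_nonneg less_imp_neq[symmetric])
    then have h: "a i = - 1 / (2 * q)" "1 + 2 * t * a i * \<alpha> i = 1 / q"
      "1 + t * a i * \<alpha> i = (2 + t * \<alpha> i) / (2 * q)"
      by (simp_all add: a_def q_def field_simps)
    show "?f i = ?g i"
      unfolding h(2,3) unfolding h(1) q_def[symmetric]
      using \<open>q \<noteq> 0\<close> by (simp add: field_simps power2_eq_square)
  qed
  finally show ?thesis by (simp add: \<zeta>_def \<xi>_def)
qed

lemma A_mat_mult_vec_add_b_vec:
  assumes "0 \<le> t"
  shows "A_mat P H R t *v v + b_vec P H R xbar z t = E *v (\<chi> i.
    ((2 + t * \<alpha> i) * (transpose V ** T *v z)$i - (Ft *v xbar)$i - (1 + t * \<alpha> i) * (Ft *v v)$i)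
      / (2 * (1 + t * \<alpha> i)\<^sup>2))"
proof -
  have "(\<chi> i. - 1 / (2 * (1 + t * \<alpha> i)) * (Ft *v v)$i)
      + (\<chi> i. ((2 + t * \<alpha> i) * (transpose V ** T *v z)$i - (Ft *v xbar)$i) / (2 * (1 + t * \<alpha> i)\<^sup>2))
    = (\<chi> i. ((2 + t * \<alpha> i) * (transpose V ** T *v z)$i - (Ft *v xbar)$i - (1 + t * \<alpha> i) * (Ft *v v)$i)
      / (2 * (1 + t * \<alpha> i)\<^sup>2))" (is "?u + ?w = ?r")
  proof (rule vec_eq_iff[THEN iffD2], intro allI)
    fix i
    define q where "q = 1 + t * \<alpha> i"
    have "q \<noteq> 0"
      using assms \<alpha>_pos[of i] by (simp add: q_def add_pos_nonneg less_imp_neq[symmetric])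
    moreover have "2 + t * \<alpha> i = 1 + q" by (simp add: q_def)
    ultimately show "(?u + ?w) $ i = ?r $ i"
      unfolding plus_vec_def vec_lambda_beta q_def[symmetric] by (simp add: field_simps power2_eq_square)
  qed
  then show ?thesis
    by (simp only: A_mat_eq[OF assms] b_vec_eq[OF assms] sandwich_mult_vec
        matrix_vector_right_distrib[symmetric])
qed

lemma integral_A_mat:
  assumes "0 \<le> l0" and "l0 \<le> l1"
  shows "integral {l0..l1} (A_mat P H R)
    = E ** diag_mat (\<lambda>i. ln (sqrt (1 + l0 * \<alpha> i) / sqrt (1 + l1 * \<alpha> i)) / \<alpha> i) ** Ft"
proof (rule integral_unique)
  show "(A_mat P H R has_integral
      E ** diag_mat (\<lambda>i. ln (sqrt (1 + l0 * \<alpha> i) / sqrt (1 + l1 * \<alpha> i)) / \<alpha> i) ** Ft) {l0..l1}"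
    using has_integral_sandwich[OF has_integral_neg_half_reciprocal[OF \<alpha>_pos assms]]
    by (rule has_integral_eq[rotated]) (use assms in \<open>simp add: A_mat_eq\<close>)
qed

lemma mat_exp_integral_A_mat:
  assumes "0 \<le> l0" and "l0 \<le> l1"
  shows "mat_exp (integral {l0..l1} (A_mat P H R))
    = mat 1 + E ** diag_mat (\<lambda>i. (sqrt (1 + l0 * \<alpha> i) / sqrt (1 + l1 * \<alpha> i) - 1) / \<alpha> i) ** Ft"
proof -
  have "1 + l * \<alpha> i > 0" if "0 \<le> l" for l i
    using that \<alpha>_pos[of i] by (simp add: add_pos_nonneg)
  then have "exp (ln (sqrt (1 + l0 * \<alpha> i) / sqrt (1 + l1 * \<alpha> i)) / \<alpha> i * \<alpha> i)
      = sqrt (1 + l0 * \<alpha> i) / sqrt (1 + l1 * \<alpha> i)" for i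
    using \<alpha>_pos[of i] assms by simp
  then show ?thesis
    by (simp add: integral_A_mat[OF assms] mat_exp_sandwich)
qed

lemma kalman_ode_endpoint:
  fixes x :: "real \<Rightarrow> real^'nx"
  assumes "0 \<le> l0" and "l0 \<le> l1"
    and ode: "\<And>l. l \<in> {l0..l1} \<Longrightarrow>
      (x has_vector_derivative (A_mat P H R l *v x l + b_vec P H R xbar z l)) (at l within {l0..l1})"
  defines "s0 \<equiv> \<lambda>i. sqrt (1 + l0 * \<alpha> i)" and "s1 \<equiv> \<lambda>i. sqrt (1 + l1 * \<alpha> i)"
  shows "x l1 = (mat 1 + E ** diag_mat (\<lambda>i. (s0 i / s1 i - 1) / \<alpha> i) ** Ft) *v x l0
    + E *v (\<chi> i. (\<alpha> i * (transpose V ** T *v z)$i * (l1 * s0 i - l0 * s1 i)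
                    + (Ft *v xbar)$i * (s0 i - s1 i)) / (\<alpha> i * (s1 i)\<^sup>2 * s0 i))"
  unfolding s0_def s1_def using assms(1,2)
proof (rule ode_endpoint)
  fix t assume "t \<in> {l0..l1}"
  with ode[OF this] \<open>0 \<le> l0\<close> show "(x has_vector_derivative E *v (\<chi> i.
      ((2 + t * \<alpha> i) * (transpose V ** T *v z)$i - (Ft *v xbar)$i - (1 + t * \<alpha> i) * (Ft *v x t)$i)
        / (2 * (1 + t * \<alpha> i)\<^sup>2))) (at t within {l0..l1})"
    by (simp add: A_mat_mult_vec_add_b_vec)
qed

end

theorem mainTheorem4:
  fixes P :: "real^'nx^'nx" and R :: "real^'nz^'nz" and H :: "real^'nx^'nz"
    and xbar :: "real^'nx" and z :: "real^'nz"
    and V :: "real^'nz^'nz" and \<alpha> :: "'nz \<Rightarrow> real"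
    and l0 l1 :: real and x :: "real \<Rightarrow> real^'nx"
  assumes P_pd: "pos_def P" and R_pd: "pos_def R"
    and H_rank: "rank H = CARD('nz)"
    and V_orth: "orthogonal_matrix V"
    and D_eig: "mat_inv_sqrt R ** H ** P ** transpose H ** mat_inv_sqrt R
                  = V ** diag_mat \<alpha> ** transpose V"
    and \<alpha>_pos: "\<And>i. \<alpha> i > 0"
    and l0_nonneg: "0 \<le> l0" and l01: "l0 < l1" and l1_le: "l1 \<le> 1"
    and ode: "\<And>l. l \<in> {l0..l1} \<Longrightarrow>
       (x has_vector_derivative (A_mat P H R l *v x l + b_vec P H R xbar z l)) (at l within {l0..l1})"
  shows
    "(let E = P ** transpose H ** mat_inv_sqrt R ** V;
          Ft = transpose V ** mat_inv_sqrt R ** H;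
          zt = transpose V ** mat_inv_sqrt R *v z;
          xt = Ft *v xbar;
          s1 = (\<lambda>i. sqrt (1 + l1 * \<alpha> i));
          s0 = (\<lambda>i. sqrt (1 + l0 * \<alpha> i));
          \<Omega> = diag_mat (\<lambda>i. (s0 i / s1 i - 1) / \<alpha> i);
          c = (\<chi> i. (\<alpha> i * zt $ i * (l1 * s0 i - l0 * s1 i) + xt $ i * (s0 i - s1 i))
                     / (\<alpha> i * (s1 i)\<^sup>2 * s0 i))
      in x l1 = (mat 1 + E ** \<Omega> ** Ft) *v x l0 + E *v c
         \<and> mat 1 + E ** \<Omega> ** Ft = mat_exp (integral {l0..l1} (\<lambda>\<mu>. A_mat P H R \<mu>)))"
proof -
  interpret kalman_setting P R H V \<alpha>
    using R_pd V_orth D_eig \<alpha>_pos by unfold_locales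
  have "l0 \<le> l1" using l01 by simp
  then show ?thesis
    using kalman_ode_endpoint[OF l0_nonneg _ ode] mat_exp_integral_A_mat[OF l0_nonneg]
    unfolding Let_def by simp
qed

end
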